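(* Let $\mathcal{P}=\{p_1>p_2>\cdots>p_k\}$ be a finite nonempty set of positive integers. Then the pair $(\mathcal{P},\mathcal{P})$ is bigraphic, and there is a bipartite graph realizing $(\mathcal{P},\mathcal{P})$ in which each stable set has exactly $p_1$ vertices; moreover, such a graph can be chosen to be a mirror bipartite graph.
   Context: For finite sets of integers $\mathcal{P}=\{p_1>\cdots>p_{k_1}\}$ and $\mathcal{Q}=\{q_1>\cdots>q_{k_2}\}$, a bipartite graph $G$ with stable sets $V_1,V_2$ realizes the pair $(\mathcal{P},\mathcal{Q})$ if the set of degrees of vertices in $V_1$ is exactly $\mathcal{P}$ (each $p_i$ occurring at least once, and no other value occurring) and the set of degrees of vertices in $V_2$ is exactly $\mathcal{Q}$; the pair is bigraphic if such $G$ exists. A bipartite graph $G=(V_1\cup V_2,E)$ is mirror if there is a bijection $\varphi:V_1\to V_2$ with $u\varphi(v)\in E \iff \varphi(u)v\in E$ for all $u,v\in V_1$. *)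

theory Defs
  imports Main
begin

text \<open>Using two (possibly different) types makes the
  stable sets automatically disjoint.\<close>

definition bipartite_graph :: "'a set \<Rightarrow> 'b set \<Rightarrow> ('a \<times> 'b) set \<Rightarrow> bool" where
  "bipartite_graph V1 V2 E \<longleftrightarrow> finite V1 \<and> finite V2 \<and> E \<subseteq> V1 \<times> V2"

definition deg1 :: "'b set \<Rightarrow> ('a \<times> 'b) set \<Rightarrow> 'a \<Rightarrow> nat" where
  "deg1 V2 E u = card {v \<in> V2. (u, v) \<in> E}"

definition deg2 :: "'a set \<Rightarrow> ('a \<times> 'b) set \<Rightarrow> 'b \<Rightarrow> nat" where
  "deg2 V1 E v = card {u \<in> V1. (u, v) \<in> E}"

definition realizes :: "'a set \<Rightarrow> 'b set \<Rightarrow> ('a \<times> 'b) set \<Rightarrow> nat set \<Rightarrow> nat set \<Rightarrow> bool" where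
  "realizes V1 V2 E P Q \<longleftrightarrow> bipartite_graph V1 V2 E \<and>
     deg1 V2 E ` V1 = P \<and> deg2 V1 E ` V2 = Q"

definition bigraphic :: "nat set \<Rightarrow> nat set \<Rightarrow> bool" where
  "bigraphic P Q \<longleftrightarrow> (\<exists>(V1::nat set) (V2::nat set) E. realizes V1 V2 E P Q)"

definition mirror :: "'a set \<Rightarrow> 'b set \<Rightarrow> ('a \<times> 'b) set \<Rightarrow> bool" where
  "mirror V1 V2 E \<longleftrightarrow> (\<exists>\<phi>. bij_betw \<phi> V1 V2 \<and>
     (\<forall>u\<in>V1. \<forall>v\<in>V1. (u, \<phi> v) \<in> E \<longleftrightarrow> (v, \<phi> u) \<in> E))"

end

theory Submission
  imports Defs
begin

text \<open>Let \<open>r(u) = #{q \<in> P. q \<le> u}\<close> be the rank of \<open>u\<close> in \<open>P\<close> and \<open>k = |P|\<close>.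
  Take \<open>{0..<Max P}\<close> as both stable sets and join \<open>u\<close> to \<open>v\<close> iff \<open>r(u) + r(v) < k\<close>.
  Since \<open>r(v) < r(p) \<longleftrightarrow> v < p\<close> for \<open>p \<in> P\<close>, the neighbourhood of \<open>u\<close> is the initial
  segment below the element \<open>p \<in> P\<close> of rank \<open>k - r(u)\<close>, so \<open>u\<close> has degree \<open>p\<close>.
  On \<open>{0..<Max P}\<close> the rank takes every value \<open>0..<k\<close>, hence every element of \<open>P\<close>
  occurs as a degree.  The edge relation is symmetric, so the identity is a
  mirror bijection.\<close>

definition rank :: "'a::linorder set \<Rightarrow> 'a \<Rightarrow> nat" where
  "rank P u = card {q \<in> P. q \<le> u}"

lemma rank_mono: "finite P \<Longrightarrow> u \<le> v \<Longrightarrow> rank P u \<le> rank P v"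
  unfolding rank_def by (rule card_mono) auto

lemma rank_less_rank_iff:
  assumes "finite P" and "p \<in> P"
  shows "rank P v < rank P p \<longleftrightarrow> v < p"
proof
  assume "v < p"
  then have "p \<in> {q \<in> P. q \<le> p} - {q \<in> P. q \<le> v}"
    using \<open>p \<in> P\<close> by simp
  moreover have "{q \<in> P. q \<le> v} \<subseteq> {q \<in> P. q \<le> p}"
    using \<open>v < p\<close> by auto
  ultimately have "{q \<in> P. q \<le> v} \<subset> {q \<in> P. q \<le> p}"
    by blast
  then show "rank P v < rank P p"
    unfolding rank_def using \<open>finite P\<close> by (simp add: psubset_card_mono)
qed (use rank_mono[OF \<open>finite P\<close>, of p v] in \<open>meson leD leI\<close>)

lemma rank_Max: "finite P \<Longrightarrow> P \<noteq> {} \<Longrightarrow> rank P (Max P) = card P"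
proof -
  assume "finite P" "P \<noteq> {}"
  then have "{q \<in> P. q \<le> Max P} = P" by auto
  then show ?thesis by (simp add: rank_def)
qed

lemma rank_0: "0 \<notin> P \<Longrightarrow> rank P (0::nat) = 0"
proof -
  assume "0 \<notin> P"
  then have "{q \<in> P. q \<le> 0} = {}" by auto
  then show ?thesis by (simp add: rank_def)
qed

lemma bij_betw_rank: "finite P \<Longrightarrow> bij_betw (rank P) P {1..card P}"
proof -
  assume "finite P"
  have "strict_mono_on P (rank P)"
    by (rule strict_mono_onI) (simp add: rank_less_rank_iff \<open>finite P\<close>)
  then have inj: "inj_on (rank P) P"
    by (rule strict_mono_on_imp_inj_on)
  have "rank P ` P \<subseteq> {1..card P}"
  proof
    fix t assume "t \<in> rank P ` P"
    then obtain p where "p \<in> P" "t = rank P p" by blast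
    then have "{q \<in> P. q \<le> p} \<noteq> {}" and "{q \<in> P. q \<le> p} \<subseteq> P" by auto
    then have "0 < rank P p" and "rank P p \<le> card P"
      unfolding rank_def using \<open>finite P\<close> by (auto simp: card_gt_0_iff card_mono)
    then show "t \<in> {1..card P}" using \<open>t = rank P p\<close> by simp
  qed
  moreover have "card (rank P ` P) = card {1..card P}"
    using card_image[OF inj] by simp
  ultimately show ?thesis
    using inj by (simp add: bij_betw_def card_subset_eq)
qed

lemma obtain_rank_eq:
  assumes "finite P" and "1 \<le> t" and "t \<le> card P"
  obtains p where "p \<in> P" and "rank P p = t"
  using bij_betw_imp_surj_on[OF bij_betw_rank[OF \<open>finite P\<close>]] assms(2,3)
  by (metis atLeastAtMost_iff imageE)

lemma rank_image_lessThan_Max: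
  fixes P :: "nat set"
  assumes "finite P" and "P \<noteq> {}" and "0 \<notin> P"
  shows "rank P ` {..<Max P} = {..<card P}"
proof
  have "Max P \<in> P" using assms(1,2) by simp
  show "rank P ` {..<Max P} \<subseteq> {..<card P}"
    using rank_less_rank_iff[OF \<open>finite P\<close> \<open>Max P \<in> P\<close>] rank_Max[OF assms(1,2)] by auto
  show "{..<card P} \<subseteq> rank P ` {..<Max P}"
  proof
    fix t assume "t \<in> {..<card P}"
    show "t \<in> rank P ` {..<Max P}"
    proof (cases "t = 0")
      case True
      have "0 < Max P" using \<open>Max P \<in> P\<close> \<open>0 \<notin> P\<close> by (metis gr0I)
      then show ?thesis using True rank_0[OF \<open>0 \<notin> P\<close>] by force
    next
      case False
      then have "1 \<le> t" "t \<le> card P" using \<open>t \<in> {..<card P}\<close> by auto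
      then obtain p where "p \<in> P" "rank P p = t"
        using obtain_rank_eq[OF \<open>finite P\<close>] by blast
      moreover from this have "p < Max P"
        using rank_less_rank_iff[OF \<open>finite P\<close> \<open>Max P \<in> P\<close>] rank_Max[OF assms(1,2)]
          \<open>t \<in> {..<card P}\<close> by auto
      ultimately show ?thesis by auto
    qed
  qed
qed

definition rank_graph :: "nat set \<Rightarrow> (nat \<times> nat) set" where
  "rank_graph P = {(u, v). u < Max P \<and> v < Max P \<and> rank P u + rank P v < card P}"

lemma deg1_rank_graph:
  assumes "finite P" and "p \<in> P" and "u < Max P" and "rank P p + rank P u = card P"
  shows "deg1 {..<Max P} (rank_graph P) u = p"
proof -
  have "rank P u + rank P v < card P \<longleftrightarrow> rank P v < rank P p" for v
    using assms(4) by linarith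
  then have "{v \<in> {..<Max P}. (u, v) \<in> rank_graph P} = {v. v < Max P \<and> rank P v < rank P p}"
    unfolding rank_graph_def using assms(3) by simp
  also have "\<dots> = {..<p}"
  proof (intro set_eqI iffI)
    fix v assume "v \<in> {v. v < Max P \<and> rank P v < rank P p}"
    then show "v \<in> {..<p}" using rank_less_rank_iff[OF assms(1,2)] by simp
  next
    fix v assume "v \<in> {..<p}"
    moreover have "p \<le> Max P" using assms(1,2) by simp
    ultimately show "v \<in> {v. v < Max P \<and> rank P v < rank P p}"
      using rank_less_rank_iff[OF assms(1,2)] by simp
  qed
  finally show ?thesis by (simp add: deg1_def)
qed

lemma deg1_rank_graph_image:
  assumes "finite P" and "P \<noteq> {}" and "0 \<notin> P"
  shows "deg1 {..<Max P} (rank_graph P) ` {..<Max P} = P"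
proof (intro equalityI subsetI)
  fix d assume "d \<in> deg1 {..<Max P} (rank_graph P) ` {..<Max P}"
  then obtain u where u: "u < Max P" "d = deg1 {..<Max P} (rank_graph P) u" by auto
  then have "rank P u < card P" using rank_image_lessThan_Max[OF assms] by blast
  then have "1 \<le> card P - rank P u" and "card P - rank P u \<le> card P" by simp_all
  then obtain p where "p \<in> P" "rank P p = card P - rank P u"
    by (rule obtain_rank_eq[OF \<open>finite P\<close>])
  then show "d \<in> P"
    using deg1_rank_graph[OF \<open>finite P\<close> _ u(1)] u(2) \<open>rank P u < card P\<close> by simp
next
  fix p assume "p \<in> P"
  then have "1 \<le> rank P p" "rank P p \<le> card P"
    using bij_betw_apply[OF bij_betw_rank[OF \<open>finite P\<close>]] by auto
  then have "card P - rank P p \<in> rank P ` {..<Max P}"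
    using rank_image_lessThan_Max[OF assms] by auto
  then obtain u where u: "u \<in> {..<Max P}" "rank P u = card P - rank P p" by auto
  then have "p = deg1 {..<Max P} (rank_graph P) u"
    using deg1_rank_graph[OF \<open>finite P\<close> \<open>p \<in> P\<close>] \<open>rank P p \<le> card P\<close> by simp
  then show "p \<in> deg1 {..<Max P} (rank_graph P) ` {..<Max P}"
    using u(1) by (rule image_eqI)
qed

lemma deg2_eq_deg1_if_sym:
  assumes "\<And>u v. (u, v) \<in> E \<longleftrightarrow> (v, u) \<in> E"
  shows "deg2 V E = deg1 V E"
proof
  fix v
  have "{u \<in> V. (u, v) \<in> E} = {u \<in> V. (v, u) \<in> E}" using assms by blast
  then show "deg2 V E v = deg1 V E v" by (simp add: deg1_def deg2_def)
qed

lemma mirror_if_sym: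
  assumes "\<And>u v. (u, v) \<in> E \<longleftrightarrow> (v, u) \<in> E"
  shows "mirror V V E"
  unfolding mirror_def using assms by (intro exI[of _ id]) simp

lemma realizes_if_sym:
  assumes "finite V" and "E \<subseteq> V \<times> V" and "\<And>u v. (u, v) \<in> E \<longleftrightarrow> (v, u) \<in> E"
    and "deg1 V E ` V = P"
  shows "realizes V V E P P"
  unfolding realizes_def bipartite_graph_def using assms deg2_eq_deg1_if_sym[OF assms(3)] by simp

lemma rank_graph_sym: "(u, v) \<in> rank_graph P \<longleftrightarrow> (v, u) \<in> rank_graph P"
  unfolding rank_graph_def by auto

theorem theorem5:
  fixes P :: "nat set"
  assumes "finite P" and "P \<noteq> {}" and "\<forall>p\<in>P. p > 0"
  shows "bigraphic P P \<and>
    (\<exists>(V1::nat set) (V2::nat set) E. realizes V1 V2 E P P \<and>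
        card V1 = Max P \<and> card V2 = Max P \<and> mirror V1 V2 E)"
proof -
  have "0 \<notin> P" using assms(3) by blast
  have "realizes {..<Max P} {..<Max P} (rank_graph P) P P"
  proof (rule realizes_if_sym)
    show "rank_graph P \<subseteq> {..<Max P} \<times> {..<Max P}"
      unfolding rank_graph_def by auto
    show "\<And>u v. (u, v) \<in> rank_graph P \<longleftrightarrow> (v, u) \<in> rank_graph P"
      by (rule rank_graph_sym)
    show "deg1 {..<Max P} (rank_graph P) ` {..<Max P} = P"
      by (rule deg1_rank_graph_image[OF assms(1,2) \<open>0 \<notin> P\<close>])
  qed simp
  moreover have "mirror {..<Max P} {..<Max P} (rank_graph P)"
    by (rule mirror_if_sym) (rule rank_graph_sym)
  ultimately have "realizes {..<Max P} {..<Max P} (rank_graph P) P P \<and>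
      card {..<Max P} = Max P \<and> card {..<Max P} = Max P \<and>
      mirror {..<Max P} {..<Max P} (rank_graph P)"
    by simp
  then show ?thesis
    unfolding bigraphic_def by blast
qed

end
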